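(* Let $C\ge2$. For a matrix $\boldsymbol{M}=[\boldsymbol{\mu}_1,\dots,\boldsymbol{\mu}_C]\in\mathbb{R}^{C\times C}$, a matrix $\boldsymbol{W}\in\mathbb{R}^{C\times C}$ with rows $\boldsymbol{w}_c^\top$ and a vector $\boldsymbol{b}\in\mathbb{R}^C$, consider the observation $\boldsymbol{h}=\boldsymbol{\mu}_\gamma+\boldsymbol{z}$, where $\gamma\sim\mathrm{Unif}\{1,\dots,C\}$ and $\boldsymbol{z}\sim\mathcal{N}(\mathbf{0},\sigma^2\boldsymbol{I}_C)$ are independent, the decision rule $\hat\gamma(\boldsymbol{h})=\arg\max_c\langle\boldsymbol{w}_c,\boldsymbol{h}\rangle+b_c$, and the error exponent $\beta(\boldsymbol{M},\boldsymbol{W},\boldsymbol{b})=-\lim_{\sigma\to0}\sigma^2\log P_\sigma\{\hat\gamma(\boldsymbol{h})\ne\gamma\}$. Then $$\beta^\star:=\max_{\boldsymbol{M},\boldsymbol{W},\boldsymbol{b}}\beta(\boldsymbol{M},\boldsymbol{W},\boldsymbol{b})\ \text{ s.t. }\ \|\boldsymbol{\mu}_c\|_2\le1\ \forall c\quad\text{equals}\quad \frac{C}{C-1}\cdot\frac14.$$ Moreover, with $\boldsymbol{M}^\star=\sqrt{\frac{C}{C-1}}\left(\boldsymbol{I}-\frac1C\mathbf{1}\mathbf{1}^\top\right)$, one has $\beta(\boldsymbol{M}^\star,\boldsymbol{M}^\star,\mathbf{0})=\beta^\star$. Every $\boldsymbol{M}$ with columns of norm at most $1$ for which some $\boldsymbol{W},\boldsymbol{b}$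 achieve $\beta(\boldsymbol{M},\boldsymbol{W},\boldsymbol{b})=\beta^\star$ is of the form $\boldsymbol{M}=\boldsymbol{U}\boldsymbol{M}^\star$ for some orthogonal $\boldsymbol{U}\in\mathbb{R}^{C\times C}$, and for such $\boldsymbol{M}$ the choice $\boldsymbol{W}=\boldsymbol{M}^\star\boldsymbol{U}^\top$, $\boldsymbol{b}=\mathbf{0}$ satisfies $\beta(\boldsymbol{M},\boldsymbol{W},\boldsymbol{b})=\beta^\star$.
   Context: $\mathbf{1}$ is the all-ones vector in $\mathbb{R}^C$; $\boldsymbol{M}^\star$ is the standard simplex equiangular tight frame. The maximum is over all $C\times C$ matrices $\boldsymbol{M}$ with columns of Euclidean norm at most $1$, all $C\times C$ matrices $\boldsymbol{W}$ and all $\boldsymbol{b}\in\mathbb{R}^C$. *)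

theory Defs
  imports "HOL-Probability.Probability"
begin

definition gauss_vec :: "real \<Rightarrow> (real^'c) measure" where
  "gauss_vec \<sigma> = density lborel (\<lambda>z. ennreal (\<Prod>i\<in>UNIV. normal_density 0 \<sigma> (z $ i)))"

text \<open>Decision rule errs on true label g at observation h unless g is the unique
  maximiser of the scores  <w_c, h> + b_c  (ties counted as errors).\<close>
definition misclassified :: "real^'c^'c \<Rightarrow> real^'c \<Rightarrow> 'c \<Rightarrow> real^'c \<Rightarrow> bool" where
  "misclassified W b g h \<longleftrightarrow>
     (\<exists>c. c \<noteq> g \<and> (W $ c) \<bullet> h + b $ c \<ge> (W $ g) \<bullet> h + b $ g)"

text \<open>Error probability: h = mu_gamma + z, gamma uniform on the C classes,
  z ~ N(0, sigma^2 I) independent; mu_gamma is column gamma of M.\<close>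
definition err_prob :: "real \<Rightarrow> real^'c^'c \<Rightarrow> real^'c^'c \<Rightarrow> real^'c \<Rightarrow> real" where
  "err_prob \<sigma> M W b =
     (\<Sum>g\<in>UNIV. measure (gauss_vec \<sigma>) {z. misclassified W b g (column g M + z)})
       / real CARD('c)"

definition has_error_exponent :: "real^'c^'c \<Rightarrow> real^'c^'c \<Rightarrow> real^'c \<Rightarrow> real \<Rightarrow> bool" where
  "has_error_exponent M W b \<beta> \<longleftrightarrow>
     ((\<lambda>\<sigma>. - (\<sigma>\<^sup>2 * ln (err_prob \<sigma> M W b))) \<longlongrightarrow> \<beta>) (at_right 0)"

definition simplex_etf :: "real^'c^'c" where
  "simplex_etf = sqrt (real CARD('c) / (real CARD('c) - 1)) *\<^sub>R
     (mat 1 - (1 / real CARD('c)) *\<^sub>R (\<chi> i j. 1))"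

end

theory Submission
  imports Defs "HOL-Real_Asymp.Real_Asymp"
begin

text \<open>
  For classes g \<noteq> c the error regions of g and of c contain opposite half-spaces whose
  distances from the origin add up to at most |\<mu>_g - \<mu>_c|, so one of them lies within
  |\<mu>_g - \<mu>_c|/2 of the origin. A small ball at that distance has Gaussian mass
  exp(-(|\<mu>_g - \<mu>_c|^2/8 + o(1))/\<sigma>^2), hence \<beta> \<le> |\<mu>_g - \<mu>_c|^2/8 for all g \<noteq> c.
  Since \<Sum>_{g,c} |\<mu>_g - \<mu>_c|^2 = 2C \<Sum>_g |\<mu>_g|^2 - 2|\<Sum>_g \<mu>_g|^2 \<le> 2C^2, this gives
  \<beta> \<le> C/(4(C-1)), and equality forces unit means with equal pairwise distances, i.e. the Gram
  matrix of the simplex ETF M*; any such family of vectors is an orthogonal image of M*.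
  Conversely, for M = U M*, W = M^T and b = 0 every error region is a union of C - 1 half-spaces
  at distance sqrt(C/(2(C-1))), and the Chernoff and union bounds match the ball estimate.
\<close>

section \<open>The isotropic Gaussian measure\<close>

lemma nn_integral_lborel_vec_prod:
  fixes F :: "'c::finite \<Rightarrow> real \<Rightarrow> ennreal"
  assumes [measurable]: "\<And>i. F i \<in> borel_measurable borel"
  shows "(\<integral>\<^sup>+z. (\<Prod>i\<in>UNIV. F i (z $ i)) \<partial>(lborel :: (real^'c) measure))
    = (\<Prod>i\<in>UNIV. \<integral>\<^sup>+x. F i x \<partial>lborel)"
proof -
  have basis: "(Basis :: (real^'c) set) = (\<lambda>i. axis i 1) ` UNIV"
    by (auto simp: Basis_vec_def)
  have inj: "inj (\<lambda>i::'c. axis i (1::real))"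
    by (auto simp: inj_def axis_eq_axis)
  define f where "f b = F (THE i. b = axis i (1::real))" for b :: "real^'c"
  have f_axis: "f (axis i 1) = F i" for i
    unfolding f_def by (rule arg_cong[where f=F]) (auto simp: axis_eq_axis)
  have "(\<integral>\<^sup>+z. (\<Prod>b\<in>Basis. f b ((z::real^'c) \<bullet> b)) \<partial>lborel)
      = (\<Prod>b\<in>(Basis::(real^'c) set). \<integral>\<^sup>+x. f b x \<partial>lborel)"
    by (rule nn_integral_lborel_prod) (auto simp: basis f_axis)
  then show ?thesis
    by (simp add: basis prod.reindex[OF inj] f_axis inner_axis)
qed

lemma nn_integral_normal_density_mult_exp:
  assumes "\<sigma> > 0"
  shows "(\<integral>\<^sup>+x. ennreal (normal_density 0 \<sigma> x * exp (s * x)) \<partial>lborel) = ennreal (exp (s^2 * \<sigma>^2 / 2))"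
proof -
  have shift: "normal_density 0 \<sigma> x * exp (s * x) = exp (s^2 * \<sigma>^2 / 2) * normal_density (s * \<sigma>^2) \<sigma> x" for x
  proof -
    have "-(x - 0)\<^sup>2 / (2 * \<sigma>\<^sup>2) + s * x = s^2 * \<sigma>^2 / 2 + (-(x - s * \<sigma>^2)\<^sup>2 / (2 * \<sigma>\<^sup>2))"
      using assms by (simp add: field_simps power2_eq_square)
    then show ?thesis
      unfolding normal_density_def by (simp add: exp_add[symmetric] mult_ac)
  qed
  have "(\<integral>\<^sup>+x. ennreal (normal_density (s * \<sigma>^2) \<sigma> x) \<partial>lborel) = 1"
    using assms by (subst nn_integral_eq_integral) auto
  then show ?thesis
    by (simp add: shift ennreal_mult nn_integral_cmult)
qed

lemma sets_gauss_vec [simp, measurable_cong]: "sets (gauss_vec \<sigma>) = sets borel"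
  by (simp add: gauss_vec_def)

lemma space_gauss_vec [simp]: "space (gauss_vec \<sigma>) = UNIV"
  by (simp add: gauss_vec_def)

lemma emeasure_gauss_vec:
  assumes "A \<in> sets borel"
  shows "emeasure (gauss_vec \<sigma>) A
    = (\<integral>\<^sup>+z. ennreal (\<Prod>i\<in>UNIV. normal_density 0 \<sigma> (z $ i)) * indicator A z \<partial>lborel)"
  using assms unfolding gauss_vec_def by (subst emeasure_density) auto

lemma prob_space_gauss_vec:
  assumes "\<sigma> > 0"
  shows "prob_space (gauss_vec \<sigma> :: (real^'c::finite) measure)"
proof (rule prob_spaceI)
  have "emeasure (gauss_vec \<sigma> :: (real^'c) measure) UNIV
      = (\<integral>\<^sup>+z. (\<Prod>i\<in>UNIV. ennreal (normal_density 0 \<sigma> (z $ i))) \<partial>(lborel :: (real^'c) measure))"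
    by (simp add: emeasure_gauss_vec prod_ennreal)
  also have "\<dots> = (\<Prod>i\<in>(UNIV::'c set). \<integral>\<^sup>+x. ennreal (normal_density 0 \<sigma> x) \<partial>lborel)"
    by (rule nn_integral_lborel_vec_prod) simp
  also have "\<dots> = 1"
    using assms by (subst nn_integral_eq_integral) auto
  finally show "emeasure (gauss_vec \<sigma> :: (real^'c) measure) (space (gauss_vec \<sigma>)) = 1"
    by simp
qed

lemma prod_normal_density_vec:
  fixes z :: "real^'c::finite"
  shows "(\<Prod>i\<in>UNIV. normal_density 0 \<sigma> (z $ i))
    = (1 / sqrt (2 * pi * \<sigma>\<^sup>2)) ^ CARD('c) * exp (- ((norm z)^2) / (2 * \<sigma>^2))"
proof -
  have "(\<Prod>i\<in>UNIV. normal_density 0 \<sigma> (z $ i))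
      = (\<Prod>i\<in>UNIV. (1 / sqrt (2 * pi * \<sigma>\<^sup>2)) * exp (- ((z $ i)^2) / (2 * \<sigma>^2)))"
    unfolding normal_density_def by simp
  also have "\<dots> = (1 / sqrt (2 * pi * \<sigma>\<^sup>2)) ^ CARD('c) * (\<Prod>i\<in>UNIV. exp (- ((z $ i)^2) / (2 * \<sigma>^2)))"
    by (subst prod.distrib) simp
  also have "(\<Prod>i\<in>UNIV. exp (- ((z $ i)^2) / (2 * \<sigma>^2))) = exp (\<Sum>i\<in>UNIV. - ((z $ i)^2) / (2 * \<sigma>^2))"
    by (simp add: exp_sum)
  also have "(\<Sum>i\<in>UNIV. - ((z $ i)^2) / (2 * \<sigma>^2)) = - ((norm z)^2) / (2 * \<sigma>^2)"
    by (simp add: norm_vec_def L2_set_def sum_nonneg sum_divide_distrib[symmetric] sum_negf)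
  finally show ?thesis .
qed

lemma emeasure_gauss_vec_halfspace_le:
  fixes a :: "real^'c::finite"
  assumes "\<sigma> > 0" "l \<ge> 0"
  shows "emeasure (gauss_vec \<sigma>) {z. t \<le> a \<bullet> z} \<le> ennreal (exp (l^2 * (norm a)^2 * \<sigma>^2 / 2 - l * t))"
proof -
  let ?d = "\<lambda>z::real^'c. \<Prod>i\<in>UNIV. normal_density 0 \<sigma> (z $ i)"
  let ?g = "\<lambda>i x. ennreal (normal_density 0 \<sigma> x * exp ((l * a $ i) * x))"
  have "emeasure (gauss_vec \<sigma>) {z. t \<le> a \<bullet> z} = (\<integral>\<^sup>+z. ennreal (?d z) * indicator {z. t \<le> a \<bullet> z} z \<partial>lborel)"
    by (simp add: emeasure_gauss_vec)
  also have "\<dots> \<le> (\<integral>\<^sup>+z. ennreal (?d z * exp (l * (a \<bullet> z - t))) \<partial>lborel)"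
  proof (rule nn_integral_mono)
    fix z :: "real^'c"
    have "?d z * 1 \<le> ?d z * exp (l * (a \<bullet> z - t))" if "t \<le> a \<bullet> z"
      using that assms by (intro mult_left_mono) (auto intro: prod_nonneg)
    then show "ennreal (?d z) * indicator {z. t \<le> a \<bullet> z} z \<le> ennreal (?d z * exp (l * (a \<bullet> z - t)))"
      by (auto intro!: ennreal_leI simp: indicator_def)
  qed
  also have "\<dots> = (\<integral>\<^sup>+z. ennreal (exp (- l * t)) * (\<Prod>i\<in>UNIV. ?g i (z $ i)) \<partial>lborel)"
  proof (rule nn_integral_cong)
    fix z :: "real^'c"
    have "exp (l * (a \<bullet> z - t)) = exp (- l * t) * (\<Prod>i\<in>UNIV. exp ((l * a $ i) * z $ i))"
      by (simp add: inner_vec_def exp_sum[symmetric] exp_add[symmetric] sum_distrib_left algebra_simps)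
    then show "ennreal (?d z * exp (l * (a \<bullet> z - t))) = ennreal (exp (- l * t)) * (\<Prod>i\<in>UNIV. ?g i (z $ i))"
      by (simp add: prod_ennreal ennreal_mult[symmetric] prod.distrib mult_ac prod_nonneg)
  qed
  also have "\<dots> = ennreal (exp (- l * t)) * (\<Prod>i\<in>UNIV. \<integral>\<^sup>+x. ?g i x \<partial>lborel)"
    by (simp add: nn_integral_cmult nn_integral_lborel_vec_prod[where F = ?g])
  also have "\<dots> = ennreal (exp (- l * t)) * (\<Prod>i\<in>UNIV. ennreal (exp ((l * a $ i)^2 * \<sigma>^2 / 2)))"
    using assms by (simp add: nn_integral_normal_density_mult_exp)
  also have "\<dots> = ennreal (exp (l^2 * (norm a)^2 * \<sigma>^2 / 2 - l * t))"
  proof -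
    have "exp (l^2 * (norm a)^2 * \<sigma>^2 / 2 - l * t) = exp (- l * t) * (\<Prod>i\<in>UNIV. exp ((l * a $ i)^2 * \<sigma>^2 / 2))"
      by (simp add: norm_vec_def L2_set_def sum_nonneg exp_sum[symmetric] exp_add[symmetric]
          sum_distrib_left sum_divide_distrib power_mult_distrib algebra_simps)
    then show ?thesis
      by (simp add: prod_ennreal ennreal_mult'[symmetric] prod_nonneg)
  qed
  finally show ?thesis .
qed

lemma measure_gauss_vec_halfspace_le:
  fixes a :: "real^'c::finite"
  assumes "\<sigma> > 0" "a \<noteq> 0" "t \<ge> 0"
  shows "measure (gauss_vec \<sigma>) {z. t \<le> a \<bullet> z} \<le> exp (- (t^2 / (2 * (norm a)^2 * \<sigma>^2)))"
proof -
  interpret prob_space "gauss_vec \<sigma> :: (real^'c) measure"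
    using prob_space_gauss_vec assms(1) .
  define l where "l = t / ((norm a)^2 * \<sigma>^2)"
  have "l \<ge> 0"
    using assms by (simp add: l_def)
  moreover have "l^2 * (norm a)^2 * \<sigma>^2 / 2 - l * t = - (t^2 / (2 * (norm a)^2 * \<sigma>^2))"
    using assms by (simp add: l_def field_simps power2_eq_square)
  ultimately show ?thesis
    using emeasure_gauss_vec_halfspace_le[OF assms(1), of l t a] by (simp add: emeasure_eq_measure)
qed

lemma measure_gauss_vec_ge_ball:
  fixes x0 :: "real^'c::finite"
  assumes "\<sigma> > 0" "ball x0 r \<subseteq> S" "S \<in> sets borel"
  shows "measure lborel (ball x0 r) * (1 / sqrt (2 * pi * \<sigma>\<^sup>2)) ^ CARD('c)
      * exp (- ((norm x0 + r)^2) / (2 * \<sigma>^2)) \<le> measure (gauss_vec \<sigma>) S"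
proof -
  interpret prob_space "gauss_vec \<sigma> :: (real^'c) measure"
    using prob_space_gauss_vec assms(1) .
  define K where "K = (1 / sqrt (2 * pi * \<sigma>\<^sup>2)) ^ CARD('c) * exp (- ((norm x0 + r)^2) / (2 * \<sigma>^2))"
  have K_le: "K \<le> (\<Prod>i\<in>UNIV. normal_density 0 \<sigma> (z $ i))" if "z \<in> ball x0 r" for z
  proof -
    have "norm z \<le> norm x0 + norm (z - x0)"
      by (rule norm_triangle_sub)
    also have "norm (z - x0) \<le> r"
      using that by (simp add: dist_norm norm_minus_commute)
    finally have "(norm z)^2 \<le> (norm x0 + r)^2"
      by (intro power_mono) auto
    then show ?thesis
      unfolding K_def prod_normal_density_vec using assms(1)
      by (intro mult_left_mono) (auto simp: divide_right_mono)
  qed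
  have "ennreal (K * measure lborel (ball x0 r)) = (\<integral>\<^sup>+z. ennreal K * indicator (ball x0 r) z \<partial>lborel)"
    using emeasure_lborel_ball_finite[of x0 r]
    by (simp add: nn_integral_cmult_indicator K_def measure_def ennreal_mult ennreal_enn2real_if)
  also have "\<dots> \<le> emeasure (gauss_vec \<sigma>) (ball x0 r)"
    unfolding emeasure_gauss_vec[OF borel_open[OF open_ball]]
    by (intro nn_integral_mono) (auto simp: indicator_def K_le intro: ennreal_leI)
  also have "\<dots> \<le> emeasure (gauss_vec \<sigma>) S"
    using assms by (intro emeasure_mono) auto
  finally have "K * measure lborel (ball x0 r) \<le> measure (gauss_vec \<sigma>) S"
    by (simp add: emeasure_eq_measure ennreal_le_iff)
  then show ?thesis
    by (simp add: K_def mult_ac)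
qed

section \<open>Small-noise asymptotics\<close>

lemma eventually_exponent_le_of_lower_bounds:
  fixes E :: "real \<Rightarrow> real"
  assumes D: "D \<ge> 0"
    and lower: "\<And>r. r > 0 \<Longrightarrow> \<exists>m>0. \<forall>\<sigma>>0. m * (1/\<sigma>)^n * exp (- ((D + r)^2) / (2 * \<sigma>^2)) \<le> E \<sigma>"
    and \<epsilon>: "\<epsilon> > 0"
  shows "eventually (\<lambda>\<sigma>. - (\<sigma>^2 * ln (E \<sigma>)) \<le> D^2/2 + \<epsilon>) (at_right 0)"
proof -
  define r where "r = min 1 (\<epsilon> / (2 * D + 1))"
  have r: "r > 0" "r \<le> 1" "r \<le> \<epsilon> / (2 * D + 1)"
    using \<epsilon> D by (auto simp: r_def)
  then have "r * r \<le> r"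
    by (simp add: mult_le_cancel_left1)
  moreover have "r * (2 * D + 1) \<le> \<epsilon>"
    using r(3) D by (simp add: field_simps)
  ultimately have rD: "(D + r)^2 / 2 \<le> D^2/2 + \<epsilon>/2"
    by (simp add: power2_eq_square algebra_simps)
  obtain m where m: "m > 0" "\<And>\<sigma>. \<sigma> > 0 \<Longrightarrow> m * (1/\<sigma>)^n * exp (- ((D + r)^2) / (2 * \<sigma>^2)) \<le> E \<sigma>"
    using lower[OF r(1)] by blast
  have "((\<lambda>\<sigma>. real n * (\<sigma>^2 * ln \<sigma>) - \<sigma>^2 * ln m) \<longlongrightarrow> 0) (at_right 0)"
    by real_asymp
  then have "eventually (\<lambda>\<sigma>. real n * (\<sigma>^2 * ln \<sigma>) - \<sigma>^2 * ln m < \<epsilon>/2) (at_right 0)"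
    by (rule order_tendstoD) (simp add: \<epsilon>)
  moreover have "eventually (\<lambda>\<sigma>::real. \<sigma> > 0) (at_right 0)"
    by (simp add: eventually_at_right_less)
  ultimately show ?thesis
  proof eventually_elim
    case (elim \<sigma>)
    let ?L = "m * (1/\<sigma>)^n * exp (- ((D + r)^2) / (2 * \<sigma>^2))"
    have "ln m - real n * ln \<sigma> - (D + r)^2 / (2 * \<sigma>^2) = ln ?L"
      using m elim by (simp add: ln_mult ln_realpow ln_div)
    also have "\<dots> \<le> ln (E \<sigma>)"
      using m elim by (subst ln_le_cancel_iff) (auto intro: less_le_trans[OF _ m(2)])
    finally have "\<sigma>^2 * (ln m - real n * ln \<sigma> - (D + r)^2 / (2 * \<sigma>^2)) \<le> \<sigma>^2 * ln (E \<sigma>)"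
      by (intro mult_left_mono) auto
    moreover have "\<sigma>^2 * (ln m - real n * ln \<sigma> - (D + r)^2 / (2 * \<sigma>^2))
        = \<sigma>^2 * ln m - real n * (\<sigma>^2 * ln \<sigma>) - (D + r)^2 / 2"
      using elim by (simp add: field_simps)
    ultimately show ?case
      using elim(1) rD by linarith
  qed
qed

lemma eventually_exponent_ge_of_upper_bound:
  fixes E :: "real \<Rightarrow> real"
  assumes K: "K > 0"
    and upper: "\<And>\<sigma>. \<sigma> > 0 \<Longrightarrow> 0 < E \<sigma> \<and> E \<sigma> \<le> K * exp (- (B / \<sigma>^2))"
    and \<epsilon>: "\<epsilon> > 0"
  shows "eventually (\<lambda>\<sigma>. B - \<epsilon> \<le> - (\<sigma>^2 * ln (E \<sigma>))) (at_right 0)"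
proof -
  have "((\<lambda>\<sigma>. \<sigma>^2 * ln K) \<longlongrightarrow> 0) (at_right 0)"
    by real_asymp
  then have "eventually (\<lambda>\<sigma>. \<sigma>^2 * ln K < \<epsilon>) (at_right 0)"
    by (rule order_tendstoD) (simp add: \<epsilon>)
  moreover have "eventually (\<lambda>\<sigma>::real. \<sigma> > 0) (at_right 0)"
    by (simp add: eventually_at_right_less)
  ultimately show ?thesis
  proof eventually_elim
    case (elim \<sigma>)
    have "ln (E \<sigma>) \<le> ln (K * exp (- (B / \<sigma>^2)))"
      using upper[OF elim(2)] K by simp
    also have "\<dots> = ln K - B / \<sigma>^2"
      using K by (simp add: ln_mult)
    finally have "\<sigma>^2 * ln (E \<sigma>) \<le> \<sigma>^2 * (ln K - B / \<sigma>^2)"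
      by (intro mult_left_mono) auto
    also have "\<dots> = \<sigma>^2 * ln K - B"
      using elim by (simp add: field_simps)
    finally show ?case
      using elim(1) by linarith
  qed
qed

lemma tendsto_le_of_eventually_le_plus:
  assumes "(f \<longlongrightarrow> (\<beta>::real)) F" "F \<noteq> bot"
    and "\<And>\<epsilon>. \<epsilon> > 0 \<Longrightarrow> eventually (\<lambda>x. f x \<le> A + \<epsilon>) F"
  shows "\<beta> \<le> A"
proof (rule field_le_epsilon)
  fix \<epsilon> :: real
  assume "\<epsilon> > 0"
  show "\<beta> \<le> A + \<epsilon>"
    by (rule tendsto_upperbound[OF assms(1) assms(3)[OF \<open>\<epsilon> > 0\<close>] assms(2)])
qed

lemma tendsto_of_eventually_le_plus_ge_minus:
  assumes "\<And>\<epsilon>. \<epsilon> > 0 \<Longrightarrow> eventually (\<lambda>x. f x \<le> A + \<epsilon>) F"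
    and "\<And>\<epsilon>. \<epsilon> > 0 \<Longrightarrow> eventually (\<lambda>x. A - \<epsilon> \<le> f x) F"
  shows "(f \<longlongrightarrow> (A::real)) F"
proof (rule tendstoI)
  fix \<epsilon> :: real
  assume "\<epsilon> > 0"
  then have "\<epsilon>/2 > 0"
    by simp
  from assms(1)[OF this] assms(2)[OF this] show "eventually (\<lambda>x. dist (f x) A < \<epsilon>) F"
    by eventually_elim (use \<open>\<epsilon> > 0\<close> in \<open>simp add: dist_real_def abs_less_iff\<close>)
qed

section \<open>Error regions\<close>

definition error_region :: "real^'c^'c \<Rightarrow> real^'c^'c \<Rightarrow> real^'c \<Rightarrow> 'c::finite \<Rightarrow> (real^'c) set" where
  "error_region M W b g = {z. misclassified W b g (column g M + z)}"

lemma error_region_borel [measurable]: "error_region M W b g \<in> sets borel"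
  unfolding error_region_def misclassified_def by measurable

lemma error_region_eq_Union_halfspaces:
  "error_region M W b g
    = (\<Union>c\<in>-{g}. {z. (W$g - W$c) \<bullet> column g M + b$g - b$c \<le> (W$c - W$g) \<bullet> z})"
  unfolding error_region_def misclassified_def by (auto simp: inner_simps algebra_simps)

lemma err_prob_eq_sum_error_region:
  fixes M W :: "real^'c::finite^'c"
  shows "err_prob \<sigma> M W b = (\<Sum>g\<in>UNIV. measure (gauss_vec \<sigma>) (error_region M W b g)) / real CARD('c)"
  by (simp add: err_prob_def error_region_def)

lemma measure_error_region_le_err_prob:
  fixes M W :: "real^'c::finite^'c"
  shows "measure (gauss_vec \<sigma>) (error_region M W b g) / real CARD('c) \<le> err_prob \<sigma> M W b"
  unfolding err_prob_eq_sum_error_region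
  by (intro divide_right_mono member_le_sum) auto

lemma err_prob_le_union_bound:
  fixes M W :: "real^'c::finite^'c"
  shows "err_prob \<sigma> M W b \<le> (\<Sum>g\<in>UNIV. \<Sum>c\<in>-{g}.
    measure (gauss_vec \<sigma>) {z. (W$g - W$c) \<bullet> column g M + b$g - b$c \<le> (W$c - W$g) \<bullet> z}) / real CARD('c)"
  unfolding err_prob_eq_sum_error_region error_region_eq_Union_halfspaces
  by (intro divide_right_mono sum_mono measure_UNION_le) auto

lemma ball_subset_halfspace:
  fixes a :: "'a::real_inner"
  assumes "t \<le> d * norm a" "d \<ge> 0" "r > 0"
  shows "\<exists>x0. norm x0 \<le> d + r \<and> ball x0 r \<subseteq> {z. t \<le> a \<bullet> z}"
proof (cases "a = 0")
  case True
  then show ?thesis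
    using assms by (intro exI[of _ 0]) auto
next
  case False
  define x0 where "x0 = ((d + r) / norm a) *\<^sub>R a"
  have "t \<le> a \<bullet> z" if "z \<in> ball x0 r" for z
  proof -
    have "a \<bullet> (x0 - z) \<le> norm a * norm (x0 - z)"
      by (rule norm_cauchy_schwarz)
    also have "\<dots> \<le> norm a * r"
      using that by (intro mult_left_mono) (auto simp: dist_norm)
    finally have "a \<bullet> x0 - norm a * r \<le> a \<bullet> z"
      by (simp add: inner_diff_right)
    moreover have "a \<bullet> x0 = (d + r) * norm a"
      using False by (simp add: x0_def power2_norm_eq_inner[symmetric] power2_eq_square)
    ultimately show ?thesis
      using assms(1) by (simp add: algebra_simps)
  qed
  moreover have "norm x0 = d + r"
    using False assms by (simp add: x0_def)
  ultimately show ?thesis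
    by (intro exI[of _ x0]) auto
qed

lemma err_prob_pos_of_ball:
  fixes M W :: "real^'c::finite^'c"
  assumes "\<sigma> > 0" "r > 0" "ball x0 r \<subseteq> error_region M W b g"
  shows "0 < err_prob \<sigma> M W b"
proof -
  have "0 < measure lborel (ball x0 r) * (1 / sqrt (2 * pi * \<sigma>\<^sup>2)) ^ CARD('c)
      * exp (- ((norm x0 + r)^2) / (2 * \<sigma>^2))"
    using content_ball_pos[of r x0] assms by simp
  also have "\<dots> \<le> measure (gauss_vec \<sigma>) (error_region M W b g)"
    using assms by (intro measure_gauss_vec_ge_ball) auto
  finally have "0 < measure (gauss_vec \<sigma>) (error_region M W b g) / real CARD('c)"
    by simp
  also have "\<dots> \<le> err_prob \<sigma> M W b"
    by (rule measure_error_region_le_err_prob)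
  finally show ?thesis .
qed

lemma ball_in_error_region_of_pair:
  fixes M W :: "real^'c::finite^'c"
  assumes "c \<noteq> g" "r > 0"
  shows "\<exists>x0 h. norm x0 \<le> norm (column g M - column c M) / 2 + r \<and> ball x0 r \<subseteq> error_region M W b h"
proof -
  define a where "a = W$c - W$g"
  define t where "t = (W$g - W$c) \<bullet> column g M + b$g - b$c"
  define t' where "t' = (W$c - W$g) \<bullet> column c M + b$c - b$g"
  define d where "d = norm (column g M - column c M) / 2"
  have g_region: "{z. t \<le> a \<bullet> z} \<subseteq> error_region M W b g"
    using assms(1) unfolding error_region_eq_Union_halfspaces a_def t_def by auto
  have c_region: "{z. t' \<le> (- a) \<bullet> z} \<subseteq> error_region M W b c"
    using assms(1) unfolding error_region_eq_Union_halfspaces a_def t'_def by auto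
  have "t + t' = a \<bullet> (column c M - column g M)"
    by (simp add: a_def t_def t'_def inner_simps algebra_simps)
  also have "\<dots> \<le> norm a * (2 * d)"
    unfolding d_def by (simp add: norm_cauchy_schwarz norm_minus_commute)
  finally have "t \<le> d * norm a \<or> t' \<le> d * norm (- a)"
    by (auto simp: algebra_simps)
  moreover have "d \<ge> 0"
    by (simp add: d_def)
  ultimately show ?thesis
    using ball_subset_halfspace[of t d a r] ball_subset_halfspace[of t' d "- a" r]
      g_region c_region assms(2) unfolding d_def by blast
qed

lemma eventually_exponent_le_of_balls:
  fixes M W :: "real^'c::finite^'c"
  assumes D: "D \<ge> 0"
    and balls: "\<And>r. r > 0 \<Longrightarrow> \<exists>x0 g. norm x0 \<le> D + r \<and> ball x0 r \<subseteq> error_region M W b g"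
    and \<epsilon>: "\<epsilon> > 0"
  shows "eventually (\<lambda>\<sigma>. - (\<sigma>^2 * ln (err_prob \<sigma> M W b)) \<le> D^2/2 + \<epsilon>) (at_right 0)"
proof (rule eventually_exponent_le_of_lower_bounds[OF D _ \<epsilon>, where n = "CARD('c)"])
  fix r :: real
  assume "r > 0"
  then obtain x0 g where x0: "norm x0 \<le> D + r/2" and sub: "ball x0 (r/2) \<subseteq> error_region M W b g"
    using balls[of "r/2"] by auto
  define m where "m = measure lborel (ball x0 (r/2)) * (1 / sqrt (2 * pi)) ^ CARD('c) / real CARD('c)"
  have "m > 0"
    unfolding m_def using content_ball_pos[of "r/2" x0] \<open>r > 0\<close> by simp
  moreover have "m * (1/\<sigma>)^CARD('c) * exp (- ((D + r)^2) / (2 * \<sigma>^2)) \<le> err_prob \<sigma> M W b"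
    if "\<sigma> > 0" for \<sigma>
  proof -
    have "(norm x0 + r/2)^2 \<le> (D + r)^2"
      using x0 \<open>r > 0\<close> by (intro power_mono) auto
    then have "exp (- ((D + r)^2) / (2 * \<sigma>^2)) \<le> exp (- ((norm x0 + r/2)^2) / (2 * \<sigma>^2))"
      using that by (simp add: divide_right_mono)
    then have "m * (1/\<sigma>)^CARD('c) * exp (- ((D + r)^2) / (2 * \<sigma>^2))
        \<le> m * (1/\<sigma>)^CARD('c) * exp (- ((norm x0 + r/2)^2) / (2 * \<sigma>^2))"
      using \<open>m > 0\<close> that by (intro mult_left_mono) auto
    also have "\<dots> = measure lborel (ball x0 (r/2)) * (1 / sqrt (2 * pi * \<sigma>\<^sup>2)) ^ CARD('c)
        * exp (- ((norm x0 + r/2)^2) / (2 * \<sigma>^2)) / real CARD('c)"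
      using that by (simp add: m_def real_sqrt_mult flip: power_mult_distrib)
    also have "\<dots> \<le> measure (gauss_vec \<sigma>) (error_region M W b g) / real CARD('c)"
      using that sub by (intro divide_right_mono measure_gauss_vec_ge_ball) auto
    also have "\<dots> \<le> err_prob \<sigma> M W b"
      by (rule measure_error_region_le_err_prob)
    finally show ?thesis .
  qed
  ultimately show "\<exists>m>0. \<forall>\<sigma>>0. m * (1/\<sigma>)^CARD('c) * exp (- ((D + r)^2) / (2 * \<sigma>^2)) \<le> err_prob \<sigma> M W b"
    by blast
qed

lemma error_exponent_le_dist_columns:
  fixes M W :: "real^'c::finite^'c"
  assumes "has_error_exponent M W b \<beta>" "c \<noteq> g"
  shows "\<beta> \<le> (norm (column g M - column c M))^2 / 8"
proof -
  define D where "D = norm (column g M - column c M) / 2"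
  have "D \<ge> 0"
    by (simp add: D_def)
  have "\<beta> \<le> D^2/2"
    using assms(1) unfolding has_error_exponent_def
  proof (rule tendsto_le_of_eventually_le_plus)
    fix \<epsilon> :: real
    assume "\<epsilon> > 0"
    show "eventually (\<lambda>\<sigma>. - (\<sigma>^2 * ln (err_prob \<sigma> M W b)) \<le> D^2/2 + \<epsilon>) (at_right 0)"
      using ball_in_error_region_of_pair[OF assms(2)]
      by (intro eventually_exponent_le_of_balls[OF \<open>D \<ge> 0\<close> _ \<open>\<epsilon> > 0\<close>]) (simp add: D_def)
  qed simp
  then show ?thesis
    by (simp add: D_def power_divide)
qed

lemma has_error_exponent_of_balls_and_bound:
  fixes M W :: "real^'c::finite^'c"
  assumes D: "D \<ge> 0"
    and balls: "\<And>r. r > 0 \<Longrightarrow> \<exists>x0 g. norm x0 \<le> D + r \<and> ball x0 r \<subseteq> error_region M W b g"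
    and K: "K > 0"
    and upper: "\<And>\<sigma>. \<sigma> > 0 \<Longrightarrow> err_prob \<sigma> M W b \<le> K * exp (- (D^2/2 / \<sigma>^2))"
  shows "has_error_exponent M W b (D^2/2)"
  unfolding has_error_exponent_def
proof (rule tendsto_of_eventually_le_plus_ge_minus)
  fix \<epsilon> :: real
  assume "\<epsilon> > 0"
  show "eventually (\<lambda>\<sigma>. - (\<sigma>^2 * ln (err_prob \<sigma> M W b)) \<le> D^2/2 + \<epsilon>) (at_right 0)"
    by (rule eventually_exponent_le_of_balls[OF D balls \<open>\<epsilon> > 0\<close>])
  obtain x0 g where "ball x0 1 \<subseteq> error_region M W b g"
    using balls[of 1] by auto
  then have "0 < err_prob \<sigma> M W b" if "\<sigma> > 0" for \<sigma>
    using that by (intro err_prob_pos_of_ball) auto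
  then show "eventually (\<lambda>\<sigma>. D^2/2 - \<epsilon> \<le> - (\<sigma>^2 * ln (err_prob \<sigma> M W b))) (at_right 0)"
    using upper by (intro eventually_exponent_ge_of_upper_bound[OF K _ \<open>\<epsilon> > 0\<close>]) auto
qed

lemma err_prob_le_of_uniform_margin:
  fixes M W :: "real^'c::finite^'c"
  assumes \<sigma>: "\<sigma> > 0" and \<kappa>: "\<kappa> > 0" and a: "a > 0"
    and margin: "\<And>g c. g \<noteq> c \<Longrightarrow> (W$g - W$c) \<bullet> column g M + b$g - b$c = \<kappa>"
    and norm: "\<And>g c. g \<noteq> c \<Longrightarrow> norm (W$c - W$g) = a"
  shows "err_prob \<sigma> M W b \<le> real CARD('c) * exp (- ((\<kappa> / a)^2 / 2 / \<sigma>^2))"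
proof -
  let ?bound = "exp (- ((\<kappa> / a)^2 / 2 / \<sigma>^2))"
  have each: "measure (gauss_vec \<sigma>) {z. (W$g - W$c) \<bullet> column g M + b$g - b$c \<le> (W$c - W$g) \<bullet> z}
      \<le> ?bound" if "c \<in> -{g}" for g c
  proof -
    from that have "g \<noteq> c"
      by auto
    then have "measure (gauss_vec \<sigma>) {z. (W$g - W$c) \<bullet> column g M + b$g - b$c \<le> (W$c - W$g) \<bullet> z}
        = measure (gauss_vec \<sigma>) {z. \<kappa> \<le> (W$c - W$g) \<bullet> z}"
      by (simp only: margin[OF \<open>g \<noteq> c\<close>])
    also have "\<dots> \<le> exp (- (\<kappa>^2 / (2 * (norm (W$c - W$g))^2 * \<sigma>^2)))"
      using \<sigma> norm[OF \<open>g \<noteq> c\<close>] a \<kappa> by (intro measure_gauss_vec_halfspace_le) auto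
    also have "\<kappa>^2 / (2 * (norm (W$c - W$g))^2 * \<sigma>^2) = (\<kappa> / a)^2 / 2 / \<sigma>^2"
      using norm[OF \<open>g \<noteq> c\<close>] by (simp add: power_divide)
    finally show ?thesis .
  qed
  have "err_prob \<sigma> M W b \<le> (\<Sum>g\<in>UNIV. \<Sum>c\<in>-{g}. measure (gauss_vec \<sigma>)
      {z. (W$g - W$c) \<bullet> column g M + b$g - b$c \<le> (W$c - W$g) \<bullet> z}) / real CARD('c)"
    by (rule err_prob_le_union_bound)
  also have "\<dots> \<le> (\<Sum>g\<in>(UNIV::'c set). \<Sum>c\<in>-{g}. ?bound) / real CARD('c)"
    by (intro divide_right_mono sum_mono each) auto
  also have "\<dots> \<le> (\<Sum>g\<in>(UNIV::'c set). \<Sum>c\<in>(UNIV::'c set). ?bound) / real CARD('c)"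
    by (intro divide_right_mono sum_mono sum_mono2) auto
  also have "\<dots> = real CARD('c) * ?bound"
    by simp
  finally show ?thesis .
qed

lemma has_error_exponent_of_uniform_margin:
  fixes M W :: "real^'c::finite^'c"
  assumes C2: "CARD('c) \<ge> 2" and \<kappa>: "\<kappa> > 0" and a: "a > 0"
    and margin: "\<And>g c. g \<noteq> c \<Longrightarrow> (W$g - W$c) \<bullet> column g M + b$g - b$c = \<kappa>"
    and norm: "\<And>g c. g \<noteq> c \<Longrightarrow> norm (W$c - W$g) = a"
  shows "has_error_exponent M W b ((\<kappa> / a)^2 / 2)"
proof (rule has_error_exponent_of_balls_and_bound)
  have halfspace: "{z. \<kappa> \<le> (W$c - W$g) \<bullet> z} \<subseteq> error_region M W b g" if "g \<noteq> c" for g c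
    using that margin[OF that] unfolding error_region_eq_Union_halfspaces by auto
  obtain g c :: 'c where gc: "g \<noteq> c"
    using C2 card_le_Suc0_iff_eq[of "UNIV :: 'c set"] by auto
  show "\<exists>x0 g. norm x0 \<le> \<kappa> / a + r \<and> ball x0 r \<subseteq> error_region M W b g" if "r > 0" for r
  proof -
    obtain x0 where "norm x0 \<le> \<kappa> / a + r" "ball x0 r \<subseteq> {z. \<kappa> \<le> (W$c - W$g) \<bullet> z}"
      using ball_subset_halfspace[of \<kappa> "\<kappa> / a" "W$c - W$g" r] norm[OF gc] \<kappa> a \<open>r > 0\<close> by auto
    then show ?thesis
      using halfspace[OF gc] by blast
  qed
  show "err_prob \<sigma> M W b \<le> real CARD('c) * exp (- ((\<kappa> / a)^2 / 2 / \<sigma>^2))" if "\<sigma> > 0" for \<sigma>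
    using err_prob_le_of_uniform_margin[OF that \<kappa> a margin norm] .
qed (use \<kappa> a in auto)

section \<open>Pairwise distances of points in the unit ball\<close>

lemma sum_sum_norm_diff_sq:
  fixes \<mu> :: "'c::finite \<Rightarrow> 'a::real_inner"
  shows "(\<Sum>g\<in>UNIV. \<Sum>c\<in>UNIV. (norm (\<mu> g - \<mu> c))^2)
    = 2 * real CARD('c) * (\<Sum>g\<in>UNIV. (norm (\<mu> g))^2) - 2 * (norm (\<Sum>g\<in>UNIV. \<mu> g))^2"
proof -
  have "(norm (\<mu> g - \<mu> c))^2 = \<mu> g \<bullet> \<mu> g + \<mu> c \<bullet> \<mu> c - 2 * (\<mu> g \<bullet> \<mu> c)" for g c
    by (simp add: power2_norm_eq_inner inner_diff_left inner_diff_right inner_commute)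
  then have "(\<Sum>g\<in>UNIV. \<Sum>c\<in>UNIV. (norm (\<mu> g - \<mu> c))^2)
      = (\<Sum>g\<in>UNIV. \<Sum>c\<in>(UNIV::'c set). \<mu> g \<bullet> \<mu> g) + (\<Sum>g\<in>(UNIV::'c set). \<Sum>c\<in>UNIV. \<mu> c \<bullet> \<mu> c)
        - 2 * (\<Sum>g\<in>UNIV. \<Sum>c\<in>UNIV. \<mu> g \<bullet> \<mu> c)"
    by (simp add: sum.distrib sum_subtractf sum_distrib_left)
  also have "(\<Sum>g\<in>(UNIV::'c set). \<Sum>c\<in>UNIV. \<mu> c \<bullet> \<mu> c) = (\<Sum>g\<in>UNIV. \<Sum>c\<in>(UNIV::'c set). \<mu> g \<bullet> \<mu> g)"
    by (rule sum.swap)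
  also have "(\<Sum>g\<in>UNIV. \<Sum>c\<in>UNIV. \<mu> g \<bullet> \<mu> c) = (\<Sum>g\<in>UNIV. \<mu> g) \<bullet> (\<Sum>g\<in>UNIV. \<mu> g)"
    by (simp add: inner_sum_left inner_sum_right) (rule sum.swap)
  finally show ?thesis
    by (simp add: power2_norm_eq_inner sum_distrib_left mult.assoc)
qed

lemma sum_if_eq_else_const:
  fixes g :: "'c::finite" and x k :: real
  shows "(\<Sum>c\<in>UNIV. if g = c then x else k) = x + (real CARD('c) - 1) * k"
proof -
  have "(\<Sum>c\<in>UNIV. if g = c then x else k) = (\<Sum>c\<in>(UNIV::'c set). k + (if g = c then x - k else 0))"
    by (rule sum.cong) auto
  then show ?thesis
    by (simp add: sum.distrib algebra_simps)
qed

lemma pairwise_dist_sq_slack: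
  fixes \<mu> :: "'c::finite \<Rightarrow> 'a::real_inner"
  shows "2 * real CARD('c) * real CARD('c) - real CARD('c) * ((real CARD('c) - 1) * d)
    = 2 * real CARD('c) * (\<Sum>g\<in>UNIV. 1 - (norm (\<mu> g))^2) + 2 * (norm (\<Sum>g\<in>UNIV. \<mu> g))^2
      + (\<Sum>g\<in>UNIV. \<Sum>c\<in>UNIV. (norm (\<mu> g - \<mu> c))^2 - (if g = c then 0 else d))"
proof -
  have dist_part: "(\<Sum>g\<in>UNIV. \<Sum>c\<in>UNIV. (norm (\<mu> g - \<mu> c))^2 - (if g = c then 0 else d))
      = 2 * real CARD('c) * (\<Sum>g\<in>UNIV. (norm (\<mu> g))^2) - 2 * (norm (\<Sum>g\<in>UNIV. \<mu> g))^2
        - real CARD('c) * ((real CARD('c) - 1) * d)"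
    by (simp add: sum_subtractf sum_sum_norm_diff_sq sum_if_eq_else_const)
  have norm_part: "(\<Sum>g\<in>UNIV. 1 - (norm (\<mu> g))^2) = real CARD('c) - (\<Sum>g\<in>UNIV. (norm (\<mu> g))^2)"
    by (simp add: sum_subtractf)
  show ?thesis
    unfolding dist_part norm_part by (simp add: algebra_simps)
qed

lemma pairwise_dist_sq_le:
  fixes \<mu> :: "'c::finite \<Rightarrow> 'a::real_inner"
  assumes "\<And>g. norm (\<mu> g) \<le> 1"
    and "\<And>g c. g \<noteq> c \<Longrightarrow> d \<le> (norm (\<mu> g - \<mu> c))^2"
  shows "(real CARD('c) - 1) * d \<le> 2 * real CARD('c)"
proof -
  have "0 \<le> 2 * real CARD('c) * real CARD('c) - real CARD('c) * ((real CARD('c) - 1) * d)"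
    unfolding pairwise_dist_sq_slack[of _ \<mu>] using assms
    by (intro add_nonneg_nonneg mult_nonneg_nonneg sum_nonneg) (auto simp: power_le_one)
  then have "real CARD('c) * ((real CARD('c) - 1) * d) \<le> real CARD('c) * (2 * real CARD('c))"
    by simp
  then show ?thesis
    by (simp add: mult_le_cancel_left_pos)
qed

lemma pairwise_dist_sq_bound_attained:
  fixes \<mu> :: "'c::finite \<Rightarrow> 'a::real_inner"
  assumes norm: "\<And>g. norm (\<mu> g) \<le> 1"
    and dist: "\<And>g c. g \<noteq> c \<Longrightarrow> d \<le> (norm (\<mu> g - \<mu> c))^2"
    and eq: "(real CARD('c) - 1) * d = 2 * real CARD('c)"
  shows "norm (\<mu> g) = 1" and "g \<noteq> c \<Longrightarrow> (norm (\<mu> g - \<mu> c))^2 = d"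
proof -
  define slack where "slack g c = (norm (\<mu> g - \<mu> c))^2 - (if g = c then 0 else d)" for g c
  have norm_slack: "0 \<le> 1 - (norm (\<mu> g))^2" for g
    using norm by (simp add: power_le_one)
  have dist_slack: "0 \<le> slack g c" for g c
    using dist by (simp add: slack_def)
  have "0 = 2 * real CARD('c) * (\<Sum>g\<in>UNIV. 1 - (norm (\<mu> g))^2) + 2 * (norm (\<Sum>g\<in>UNIV. \<mu> g))^2
      + (\<Sum>g\<in>UNIV. \<Sum>c\<in>UNIV. slack g c)"
    using pairwise_dist_sq_slack[of d \<mu>] eq by (simp add: slack_def)
  moreover have "0 \<le> (\<Sum>g\<in>UNIV. 1 - (norm (\<mu> g))^2)" "0 \<le> (\<Sum>g\<in>UNIV. \<Sum>c\<in>UNIV. slack g c)"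
    using norm_slack dist_slack by (auto intro!: sum_nonneg)
  moreover have "0 \<le> (norm (\<Sum>g\<in>UNIV. \<mu> g))^2"
    by simp
  ultimately have "(\<Sum>g\<in>UNIV. 1 - (norm (\<mu> g))^2) = 0" "(\<Sum>g\<in>UNIV. \<Sum>c\<in>UNIV. slack g c) = 0"
    by (simp_all add: add_nonneg_eq_0_iff)
  then have "1 - (norm (\<mu> g))^2 = 0" "slack g c = 0"
    using norm_slack dist_slack by (simp_all add: sum_nonneg_eq_0_iff sum_nonneg)
  then show "norm (\<mu> g) = 1" "g \<noteq> c \<Longrightarrow> (norm (\<mu> g - \<mu> c))^2 = d"
    by (simp_all add: slack_def norm_eq_1 power2_norm_eq_inner)
qed

section \<open>The simplex equiangular tight frame\<close>

lemma simplex_etf_nth: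
  "(simplex_etf :: real^'c::finite^'c) $ i $ j
    = sqrt (real CARD('c) / (real CARD('c) - 1)) * ((if i = j then 1 else 0) - 1 / real CARD('c))"
  by (simp add: simplex_etf_def mat_def)

lemma transpose_simplex_etf: "transpose simplex_etf = (simplex_etf :: real^'c::finite^'c)"
  by (simp add: transpose_def simplex_etf_nth eq_commute vec_eq_iff)

lemma inner_columns_simplex_etf:
  assumes "CARD('c::finite) \<ge> 2"
  shows "column j (simplex_etf :: real^'c^'c) \<bullet> column k simplex_etf
    = (if j = k then 1 else - 1 / (real CARD('c) - 1))"
proof -
  define C where "C = real CARD('c)"
  define s where "s = sqrt (C / (C - 1))"
  have C: "C > 1"
    using assms by (simp add: C_def)
  have delta: "(\<Sum>i\<in>UNIV. (if i = j then 1 else 0) * (if i = k then 1 else 0) :: real) = (if j = k then 1 else 0)"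
    by (simp add: if_distrib[of "\<lambda>x. x * _"] cong: if_cong)
  have "column j (simplex_etf :: real^'c^'c) \<bullet> column k simplex_etf
      = (\<Sum>i\<in>UNIV. (s * ((if i = j then 1 else 0) - 1 / C)) * (s * ((if i = k then 1 else 0) - 1 / C)))"
    by (simp add: inner_vec_def column_def simplex_etf_nth C_def s_def)
  also have "\<dots> = (s * s) * (\<Sum>i\<in>UNIV. (if i = j then 1 else 0) * (if i = k then 1 else 0)
      - (if i = j then 1 else 0) / C - (if i = k then 1 else 0) / C + 1 / (C * C))"
    by (simp add: sum_distrib_left algebra_simps)
  also have "\<dots> = (s * s) * ((if j = k then 1 else 0) - 1 / C - 1 / C + C / (C * C))"
    by (simp add: sum.distrib sum_subtractf delta C_def if_distrib[of "\<lambda>x. x / _"] cong: if_cong)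
  also have "\<dots> = (if j = k then 1 else - 1 / (C - 1))"
    using C by (simp add: s_def field_simps)
  finally show ?thesis
    by (simp add: C_def)
qed

lemma column_matrix_matrix_mult: "column j (A ** B) = A *v column j B"
  by (simp add: vec_eq_iff column_def matrix_matrix_mult_def matrix_vector_mult_def)

lemma inner_columns_orthogonal_matrix_mult:
  fixes U :: "real^'n^'n"
  assumes "orthogonal_matrix U"
  shows "column j (U ** A) \<bullet> column k (U ** A) = column j A \<bullet> column k A"
proof -
  have "orthogonal_transformation (\<lambda>x. U *v x)"
    using assms by (simp add: orthogonal_transformation_matrix)
  then show ?thesis
    by (simp add: orthogonal_transformation_def column_matrix_matrix_mult)
qed

lemma simplex_etf_mult_transpose_nth:
  "(simplex_etf ** transpose U) $ c = column c (U ** (simplex_etf :: real^'c::finite^'c))"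
proof -
  have "simplex_etf ** transpose U = transpose (U ** simplex_etf)"
    by (simp add: matrix_transpose_mul transpose_simplex_etf)
  then show ?thesis
    by (metis row_transpose row_def vec_lambda_eta)
qed


lemma sum_columns_eq_0_of_simplex_gram:
  fixes M :: "real^'c::finite^'c"
  assumes "CARD('c) \<ge> 2"
    and gram: "\<And>j k. column j M \<bullet> column k M = (if j = k then 1 else - 1 / (real CARD('c) - 1))"
  shows "(\<Sum>j\<in>UNIV. column j M) = 0"
proof -
  have "(\<Sum>j\<in>UNIV. column j M) \<bullet> (\<Sum>j\<in>UNIV. column j M) = (\<Sum>j\<in>UNIV. \<Sum>k\<in>UNIV. column j M \<bullet> column k M)"
    by (simp add: inner_sum_left inner_sum_right) (rule sum.swap)
  also have "\<dots> = 0"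
    using assms(1) by (simp add: gram sum_if_eq_else_const)
  finally show ?thesis
    by simp
qed

lemma column_mult_simplex_etf:
  fixes U :: "real^'c::finite^'c"
  shows "column k (U ** simplex_etf) = sqrt (real CARD('c) / (real CARD('c) - 1))
    *\<^sub>R (column k U - (1 / real CARD('c)) *\<^sub>R (\<Sum>j\<in>UNIV. column j U))"
proof -
  have "column k simplex_etf
      = sqrt (real CARD('c) / (real CARD('c) - 1)) *\<^sub>R (axis k 1 - (1 / real CARD('c)) *\<^sub>R (\<chi> i. 1))"
    by (simp add: vec_eq_iff column_def simplex_etf_nth axis_def)
  moreover have "U *v (\<chi> i. 1) = (\<Sum>j\<in>UNIV. column j U)"
    by (simp add: matrix_mult_sum scalar_mult_eq_scaleR)
  ultimately show ?thesis
    by (simp add: column_matrix_matrix_mult matrix_vector_mult_diff_distrib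
        matrix_vector_mult_scaleR matrix_vector_mult_basis)
qed

lemma exists_unit_orthogonal_to_columns:
  fixes M :: "real^'c::finite^'c"
  assumes "(\<Sum>j\<in>UNIV. column j M) = 0"
  obtains u where "u \<bullet> u = 1" "\<And>j. u \<bullet> column j M = 0"
proof -
  have "M *v (\<chi> i. 1) = 0" "(\<chi> i. 1) \<noteq> (0 :: real^'c)"
    using assms by (auto simp: matrix_mult_sum scalar_mult_eq_scaleR vec_eq_iff)
  then have "rank M \<noteq> CARD('c)"
    using matrix_nonfull_linear_equations_eq by blast
  then have "dim (columns M) < DIM(real^'c)"
    using rank_bound[of M] by (simp add: column_rank_def)
  then obtain v where v: "v \<noteq> 0" "\<And>y. y \<in> span (columns M) \<Longrightarrow> orthogonal v y"
    using orthogonal_to_subspace_exists by blast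
  have "v \<bullet> column j M = 0" for j
    using v(2)[OF span_base] by (auto simp: columns_def orthogonal_def)
  with v(1) show ?thesis
    by (intro that[of "(1 / norm v) *\<^sub>R v"]) (simp_all add: power2_norm_eq_inner[symmetric] power2_eq_square)
qed

lemma simplex_etf_factor:
  fixes M :: "real^'c::finite^'c"
  assumes C2: "CARD('c) \<ge> 2"
    and gram: "\<And>j k. column j M \<bullet> column k M = (if j = k then 1 else - 1 / (real CARD('c) - 1))"
  shows "\<exists>U. orthogonal_matrix U \<and> M = U ** simplex_etf"
proof -
  define C where "C = real CARD('c)"
  define s where "s = sqrt (C / (C - 1))"
  have C: "C > 1"
    using C2 by (simp add: C_def)
  then have s: "s > 0" "s * s = C / (C - 1)"
    by (simp_all add: s_def)
  have sum_zero: "(\<Sum>j\<in>UNIV. column j M) = 0"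
    using sum_columns_eq_0_of_simplex_gram[OF C2 gram] .
  obtain u where u: "u \<bullet> u = 1" "\<And>j. u \<bullet> column j M = 0"
    using exists_unit_orthogonal_to_columns[OF sum_zero] by blast
  \<comment> \<open>The common component u/sqrt C makes the rescaled means orthonormal, and M* removes it again.\<close>
  define U :: "real^'c^'c" where "U = (\<chi> i j. column j M $ i / s + u $ i / sqrt C)"
  have column_U: "column j U = (1 / s) *\<^sub>R column j M + (1 / sqrt C) *\<^sub>R u" for j
    by (simp add: U_def column_def vec_eq_iff)
  have inner_U: "column j U \<bullet> column k U
      = ((1 / s) * (1 / s)) * (column j M \<bullet> column k M) + ((1 / sqrt C) * (1 / sqrt C)) * (u \<bullet> u)" for j k
    unfolding column_U inner_add_left inner_add_right inner_scaleR_left inner_scaleR_right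
      u(2) inner_commute[of "column _ M" u] by simp
  have scales: "(1 / s) * (1 / s) = (C - 1) / C" "(1 / sqrt C) * (1 / sqrt C) = 1 / C"
    using C s by (simp_all add: field_simps)
  have "column j U \<bullet> column k U = (if j = k then 1 else 0)" for j k
    using C u(1) unfolding inner_U scales
    by (cases "j = k") (simp_all add: gram C_def[symmetric] field_simps)
  then have "orthogonal_matrix U"
    by (auto simp: orthogonal_matrix_orthonormal_columns norm_eq_1 orthogonal_def)
  have "(\<Sum>j\<in>UNIV. column j U) = (1 / s) *\<^sub>R (\<Sum>j\<in>UNIV. column j M) + (C / sqrt C) *\<^sub>R u"
    by (simp add: column_U sum.distrib scaleR_sum_right sum_constant_scaleR C_def del: sum_constant)
  also have "\<dots> = sqrt C *\<^sub>R u"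
    using C by (simp add: sum_zero real_div_sqrt)
  finally have sum_U: "(\<Sum>j\<in>UNIV. column j U) = sqrt C *\<^sub>R u" .
  have "column k (U ** simplex_etf) = column k M + (s * (1 / sqrt C - sqrt C / C)) *\<^sub>R u" for k
    unfolding column_mult_simplex_etf C_def[symmetric] s_def[symmetric] sum_U
    using s by (simp add: column_U algebra_simps)
  moreover have "sqrt C / C = 1 / sqrt C"
    using C by (simp add: field_simps)
  ultimately have "column k (U ** simplex_etf) = column k M" for k
    by simp
  then have "M = U ** simplex_etf"
    by (simp add: vec_eq_iff column_def)
  with \<open>orthogonal_matrix U\<close> show ?thesis
    by blast
qed

section \<open>The optimal error exponent\<close>

lemma error_exponent_le_simplex_bound:
  fixes M W :: "real^'c::finite^'c"
  assumes "CARD('c) \<ge> 2" "\<And>c. norm (column c M) \<le> 1" "has_error_exponent M W b \<beta>"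
  shows "\<beta> \<le> real CARD('c) / (real CARD('c) - 1) * (1/4)"
proof -
  have "8 * \<beta> \<le> (norm (column g M - column c M))^2" if "g \<noteq> c" for g c
    using error_exponent_le_dist_columns[OF assms(3), of c g] that by simp
  then have "(real CARD('c) - 1) * (8 * \<beta>) \<le> 2 * real CARD('c)"
    using assms(2) by (rule pairwise_dist_sq_le[rotated])
  then show ?thesis
    using assms(1) by (simp add: field_simps)
qed

lemma gram_of_optimal_error_exponent:
  fixes M W :: "real^'c::finite^'c"
  assumes C2: "CARD('c) \<ge> 2" and norm: "\<And>c. norm (column c M) \<le> 1"
    and opt: "has_error_exponent M W b (real CARD('c) / (real CARD('c) - 1) * (1/4))"
  shows "column j M \<bullet> column k M = (if j = k then 1 else - 1 / (real CARD('c) - 1))"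
proof -
  define C where "C = real CARD('c)"
  define d where "d = 2 * C / (C - 1)"
  have C: "C > 1"
    using C2 by (simp add: C_def)
  have d_eq: "d = 8 * (real CARD('c) / (real CARD('c) - 1) * (1/4))"
    using C by (simp add: d_def C_def field_simps)
  have dist: "d \<le> (norm (column g M - column c M))^2" if "g \<noteq> c" for g c
    using error_exponent_le_dist_columns[OF opt not_sym[OF that]] unfolding d_eq by linarith
  have eq: "(C - 1) * d = 2 * C"
    using C by (simp add: d_def)
  have norm_eq: "norm (column i M) = 1" for i
    using pairwise_dist_sq_bound_attained(1)[of "\<lambda>c. column c M", OF norm dist] eq by (simp add: C_def)
  have dist_eq: "(norm (column g M - column c M))^2 = d" if "g \<noteq> c" for g c
    using pairwise_dist_sq_bound_attained(2)[of "\<lambda>c. column c M", OF norm dist _ that] eq by (simp add: C_def)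
  show ?thesis
  proof (cases "j = k")
    case True
    then show ?thesis
      using norm_eq[of k] by (simp add: norm_eq_1)
  next
    case False
    have "(norm (column j M - column k M))^2
        = (norm (column j M))^2 + (norm (column k M))^2 - 2 * (column j M \<bullet> column k M)"
      by (simp add: power2_norm_eq_inner inner_diff_left inner_diff_right inner_commute)
    then have "2 - 2 * (column j M \<bullet> column k M) = d"
      using norm_eq[of j] norm_eq[of k] dist_eq[OF False] by simp
    then show ?thesis
      using False C by (simp add: d_def C_def[symmetric] field_simps)
  qed
qed

lemma has_error_exponent_of_simplex_gram:
  fixes M W :: "real^'c::finite^'c"
  assumes C2: "CARD('c) \<ge> 2"
    and gram: "\<And>j k. column j M \<bullet> column k M = (if j = k then 1 else - 1 / (real CARD('c) - 1))"
    and rows: "\<And>c. W $ c = column c M"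
  shows "has_error_exponent M W 0 (real CARD('c) / (real CARD('c) - 1) * (1/4))"
proof -
  define C where "C = real CARD('c)"
  define \<kappa> where "\<kappa> = C / (C - 1)"
  have C: "C > 1"
    using C2 by (simp add: C_def)
  then have \<kappa>: "\<kappa> > 0"
    by (simp add: \<kappa>_def)
  have gram_C: "column j M \<bullet> column k M = (if j = k then 1 else - 1 / (C - 1))" for j k
    by (simp add: gram C_def)
  have "(W$g - W$c) \<bullet> column g M + (0::real^'c)$g - (0::real^'c)$c = \<kappa>" if "g \<noteq> c" for g c
    using that C by (simp add: rows inner_diff_left gram_C \<kappa>_def field_simps)
  moreover have "norm (W$c - W$g) = sqrt (2 * \<kappa>)" if "g \<noteq> c" for g c
  proof -
    have "(norm (W$c - W$g))^2 = 2 + 2 / (C - 1)"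
      using that by (simp add: rows power2_norm_eq_inner inner_diff_left inner_diff_right inner_commute gram_C)
    also have "\<dots> = 2 * \<kappa>"
      using C by (simp add: \<kappa>_def field_simps)
    finally show ?thesis
      by (metis norm_ge_zero real_sqrt_unique)
  qed
  ultimately have "has_error_exponent M W 0 ((\<kappa> / sqrt (2 * \<kappa>))^2 / 2)"
    using \<kappa> by (intro has_error_exponent_of_uniform_margin[OF C2]) auto
  moreover have "(\<kappa> / sqrt (2 * \<kappa>))^2 / 2 = C / (C - 1) * (1/4)"
    using \<kappa> by (simp add: power_divide \<kappa>_def[symmetric] power2_eq_square)
  ultimately show ?thesis
    by (simp add: C_def)
qed

theorem theorem5:
  assumes C2: "CARD('c::finite) \<ge> 2"
  defines "\<beta>s \<equiv> real CARD('c) / (real CARD('c) - 1) * (1/4)"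
  shows "(\<forall>(M::real^'c^'c) W b \<beta>. (\<forall>c. norm (column c M) \<le> 1) \<longrightarrow>
            has_error_exponent M W b \<beta> \<longrightarrow> \<beta> \<le> \<beta>s)
    \<and> has_error_exponent (simplex_etf :: real^'c^'c) simplex_etf 0 \<beta>s
    \<and> (\<forall>(M::real^'c^'c) W b. (\<forall>c. norm (column c M) \<le> 1) \<longrightarrow>
            has_error_exponent M W b \<beta>s \<longrightarrow>
            (\<exists>U. orthogonal_matrix U \<and> M = U ** simplex_etf))
    \<and> (\<forall>U::real^'c^'c. orthogonal_matrix U \<longrightarrow>
            has_error_exponent (U ** simplex_etf) (simplex_etf ** transpose U) 0 \<beta>s)"
proof -
  have rotated: "has_error_exponent (U ** simplex_etf) (simplex_etf ** transpose U) 0 \<beta>s"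
    if "orthogonal_matrix U" for U :: "real^'c^'c"
    unfolding \<beta>s_def using that
    by (intro has_error_exponent_of_simplex_gram[OF C2])
      (simp_all add: inner_columns_orthogonal_matrix_mult inner_columns_simplex_etf[OF C2]
        simplex_etf_mult_transpose_nth)
  then have "has_error_exponent (simplex_etf :: real^'c^'c) simplex_etf 0 \<beta>s"
    using orthogonal_matrix_id by fastforce
  moreover have "\<exists>U. orthogonal_matrix U \<and> M = U ** simplex_etf"
    if "\<forall>c. norm (column c M) \<le> 1" "has_error_exponent M W b \<beta>s" for M W :: "real^'c^'c" and b
    using that unfolding \<beta>s_def
    by (intro simplex_etf_factor[OF C2] gram_of_optimal_error_exponent[OF C2]) auto
  ultimately show ?thesis
    using error_exponent_le_simplex_bound[OF C2] rotated unfolding \<beta>s_def by blast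
qed

end
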